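(* Let $\mathcal P$ and $\mathrm{conv}(\mathcal P)$ be as in the context. Let $\mathcal S\subseteq[0,\min\{L-1,T-3,\lfloor(\overline C-\overline V)/V\rfloor\}]_{\mathbb Z}$ and let $\eta$ be a real number with $0\le\eta\le\min\{L-1,(\overline C-\overline V)/V\}$. For any $t\in[1,T-1]_{\mathbb Z}$ with $t\ge s+2$ for all $s\in\mathcal S$, the inequality $$x_t\le(\overline C-\eta V)y_t+\eta Vy_{t+1}-\sum_{s\in\mathcal S}(\overline C-\overline V-sV)(y_{t-s}-y_{t-s-1})\qquad(\ast)$$ is valid for $\mathrm{conv}(\mathcal P)$. For any $t\in[2,T]_{\mathbb Z}$ with $t\le T-s-1$ for all $s\in\mathcal S$, the inequality $$x_t\le(\overline C-\eta V)y_t+\eta Vy_{t-1}-\sum_{s\in\mathcal S}(\overline C-\overline V-sV)(y_{t+s}-y_{t+s+1})\qquad(\ast\ast)$$ is valid for $\mathrm{conv}(\mathcal P)$. Furthermore, $(\ast)$ and $(\ast\ast)$ (for these ranges of $t$) are facet-defining for $\mathrm{conv}(\mathcal P)$ when $\eta\in\{0,(\overline C-\overline V)/V\}$ or $\eta=L-1\in\mathcal S$.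
   Context: For integers $a,b$, $[a,b]_{\mathbb Z}=\{a,a+1,\dots,b\}$ if $a\le b$ and $\emptyset$ otherwise. Fix a positive integer $T$, positive integers $L$ (minimum up time) and $\ell$ (minimum down time), and reals $\overline C,\underline C,V,\overline V$ with $\overline C>\underline C>0$, $V>0$, $\overline V+V\le\overline C$ and $\underline C<\overline V<\underline C+V$. $\mathcal P$ is the set of $(\mathbf x,\mathbf y)=((x_1,\dots,x_T),(y_1,\dots,y_T))\in\mathbb R_+^T\times\{0,1\}^T$ satisfying: (i) $-y_{t-1}+y_t-y_k\le 0$ for all $t\in[2,T]_{\mathbb Z}$, $k\in[t,\min\{T,t+L-1\}]_{\mathbb Z}$; (ii) $y_{t-1}-y_t+y_k\le 1$ for all $t\in[2,T]_{\mathbb Z}$, $k\in[t,\min\{T,t+\ell-1\}]_{\mathbb Z}$; (iii) $-x_t+\underline C y_t\le 0$ and $x_t-\overline C y_t\le 0$ for all $t\in[1,T]_{\mathbb Z}$; (iv) $x_t-x_{t-1}\le Vy_{t-1}+\overline V(1-y_{t-1})$ for all $t\in[2,T]_{\mathbb Z}$; (v) $x_{t-1}-x_t\le Vy_t+\overline V(1-y_t)$ for all $t\in[2,T]_{\mathbb Z}$. $\mathrm{conv}(\mathcal P)\subseteq\mathbb R^{2T}$ is its convex hull. A linear inequality is valid for $\mathrm{conv}(\mathcal P)$ if all its points satisfy it, and facet-defining if moreover the set of points of $\mathrm{conv}(\mathcal P)$ satisfying it with equality has dimension $\dim\mathrm{conv}(\mathcal P)-1$. *)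

theory Defs
  imports "HOL-Analysis.Analysis"
begin

text \<open>Points of R^{2T} are pairs (x,y) of vectors in real^'n, where the coordinate
  index type 'n is identified with the time periods 1..T via a bijection iota.\<close>

definition xc :: "(nat \<Rightarrow> 'n::finite) \<Rightarrow> (real^'n) \<times> (real^'n) \<Rightarrow> nat \<Rightarrow> real" where
  "xc \<iota> p t = fst p $ \<iota> t"

definition yc :: "(nat \<Rightarrow> 'n::finite) \<Rightarrow> (real^'n) \<times> (real^'n) \<Rightarrow> nat \<Rightarrow> real" where
  "yc \<iota> p t = snd p $ \<iota> t"

definition Pset :: "(nat \<Rightarrow> 'n::finite) \<Rightarrow> nat \<Rightarrow> nat \<Rightarrow> nat \<Rightarrow> real \<Rightarrow> real \<Rightarrow> real \<Rightarrow> real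
     \<Rightarrow> ((real^'n) \<times> (real^'n)) set" where
  "Pset \<iota> T L l Cbar Cund V Vbar = {p.
     (\<forall>t\<in>{1..T}. xc \<iota> p t \<ge> 0 \<and> yc \<iota> p t \<in> {0, 1}) \<and>
     (\<forall>t\<in>{2..T}. \<forall>k\<in>{t..min T (t + L - 1)}.
        - yc \<iota> p (t - 1) + yc \<iota> p t - yc \<iota> p k \<le> 0) \<and>
     (\<forall>t\<in>{2..T}. \<forall>k\<in>{t..min T (t + l - 1)}.
        yc \<iota> p (t - 1) - yc \<iota> p t + yc \<iota> p k \<le> 1) \<and>
     (\<forall>t\<in>{1..T}. - xc \<iota> p t + Cund * yc \<iota> p t \<le> 0 \<and> xc \<iota> p t - Cbar * yc \<iota> p t \<le> 0) \<and>
     (\<forall>t\<in>{2..T}. xc \<iota> p t - xc \<iota> p (t - 1)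
        \<le> V * yc \<iota> p (t - 1) + Vbar * (1 - yc \<iota> p (t - 1))) \<and>
     (\<forall>t\<in>{2..T}. xc \<iota> p (t - 1) - xc \<iota> p t
        \<le> V * yc \<iota> p t + Vbar * (1 - yc \<iota> p t))}"

definition valid_ineq :: "'a set \<Rightarrow> ('a \<Rightarrow> real) \<Rightarrow> ('a \<Rightarrow> real) \<Rightarrow> bool" where
  "valid_ineq K lhs rhs \<longleftrightarrow> (\<forall>p\<in>K. lhs p \<le> rhs p)"

definition facet_defining :: "('a::euclidean_space) set \<Rightarrow> ('a \<Rightarrow> real) \<Rightarrow> ('a \<Rightarrow> real) \<Rightarrow> bool" where
  "facet_defining K lhs rhs \<longleftrightarrow> valid_ineq K lhs rhs \<and>
     aff_dim {p\<in>K. lhs p = rhs p} = aff_dim K - 1"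

end

theory Submission
  imports Defs
begin

(* In a feasible schedule a start-up at t - s with s in S keeps the unit on through t
   (as s < L), so two such start-ups cannot both happen and the sum over S is at most the term
   Cbar - Vbar - s V of the start-up, if any.  Ramping up from it gives x_t <= Vbar + s V; if the
   unit is also off at t + 1, then x_t <= Vbar and the minimum up time forces s = L - 1 >= eta.
   Without such a start-up, x_t <= Cbar, and x_t <= Vbar <= Cbar - eta V if the unit is off at t + 1.

   Facet.  conv P is full-dimensional.  The face contains the full-output schedule, its variants
   with the output lowered by V in one period k <> t, and for every k a schedule that is on exactly
   on an interval ending at k - 1 or starting at k; for k = t + 1 such a schedule exists only for
   the special values of eta.  Together with the full-output schedule lowered at t, which lies off
   the face, these points affinely span R^2T.

   Time reversal t |-> T + 1 - t maps P onto itself, since for 0/1 sequences the minimum up and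
   down time constraints are symmetric in time; it turns the second inequality into the first. *)

lemma valid_ineq_convex_hull:
  fixes lhs rhs :: "'a::real_vector \<Rightarrow> real"
  assumes lin: "linear (\<lambda>p. rhs p - lhs p)" and valid: "\<forall>p\<in>P. lhs p \<le> rhs p"
  shows "valid_ineq (convex hull P) lhs rhs"
proof -
  have "convex ((\<lambda>p. rhs p - lhs p) -` {0..})"
    using lin convex_real_interval(1) by (rule convex_linear_vimage)
  then have "convex hull P \<subseteq> (\<lambda>p. rhs p - lhs p) -` {0..}"
    using valid by (intro hull_minimal) auto
  then show ?thesis unfolding valid_ineq_def by auto
qed

lemma valid_ineq_comp:
  assumes "f ` K \<subseteq> K" "valid_ineq K lhs rhs"
  shows "valid_ineq K (\<lambda>p. lhs (f p)) (\<lambda>p. rhs (f p))"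
  using assms unfolding valid_ineq_def by blast

lemma facet_definingI:
  fixes lhs rhs :: "'a::euclidean_space \<Rightarrow> real"
  assumes lin: "linear (\<lambda>p. rhs p - lhs p)" and valid: "\<forall>p\<in>P. lhs p \<le> rhs p"
    and full: "affine hull P = UNIV"
    and off_face: "lhs q \<noteq> rhs q"
    and face_full: "affine hull (insert q {p \<in> convex hull P. lhs p = rhs p}) = UNIV"
  shows "facet_defining (convex hull P) lhs rhs"
proof -
  let ?F = "{p \<in> convex hull P. lhs p = rhs p}"
  have "affine hull ?F \<subseteq> {p. rhs p - lhs p = 0}"
    using real_vector.linear_subspace_kernel[OF lin] by (intro hull_minimal subspace_imp_affine) auto
  then have "q \<notin> affine hull ?F" using off_face by auto
  then have "aff_dim ?F = int DIM('a) - 1"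
    using face_full aff_dim_insert[of q ?F] aff_dim_eq_full by (metis add_diff_cancel_right')
  moreover have "aff_dim (convex hull P) = int DIM('a)"
    using full aff_dim_eq_full aff_dim_convex_hull by metis
  ultimately show ?thesis
    unfolding facet_defining_def using valid_ineq_convex_hull[OF lin valid] by simp
qed

lemma facet_defining_linear_automorphism:
  fixes f :: "'a::euclidean_space \<Rightarrow> 'a"
  assumes f: "linear f" "inj f" and K: "f ` K = K" and facet: "facet_defining K lhs rhs"
  shows "facet_defining K (\<lambda>p. lhs (f p)) (\<lambda>p. rhs (f p))"
proof -
  have "f ` {p \<in> K. lhs (f p) = rhs (f p)} = {p \<in> K. lhs p = rhs p}"
  proof (intro equalityI subsetI)
    fix q assume "q \<in> {p \<in> K. lhs p = rhs p}"
    moreover from this obtain p where "p \<in> K" "q = f p"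
      using K by (metis (no_types, lifting) imageE mem_Collect_eq)
    ultimately show "q \<in> f ` {p \<in> K. lhs (f p) = rhs (f p)}" by auto
  qed (use K in auto)
  then have "aff_dim {p \<in> K. lhs (f p) = rhs (f p)} = aff_dim {p \<in> K. lhs p = rhs p}"
    using aff_dim_injective_linear_image[OF f] by metis
  moreover have "valid_ineq K (\<lambda>p. lhs (f p)) (\<lambda>p. rhs (f p))"
    using facet valid_ineq_comp[OF equalityD1[OF K]] unfolding facet_defining_def by blast
  ultimately show ?thesis using facet unfolding facet_defining_def by simp
qed

lemma sum_mult_le_sum_subset:
  fixes c d :: "'a \<Rightarrow> real"
  assumes "finite S" "A \<subseteq> S" "\<forall>s\<in>S. 0 \<le> c s" "\<forall>s\<in>A. d s \<le> 1" "\<forall>s\<in>S - A. d s \<le> 0"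
  shows "(\<Sum>s\<in>S. c s * d s) \<le> sum c A"
proof -
  have "(\<Sum>s\<in>S. c s * d s) = (\<Sum>s\<in>A. c s * d s) + (\<Sum>s\<in>S - A. c s * d s)"
    using assms(1,2) by (metis add.commute sum.subset_diff)
  also have "\<dots> \<le> sum c A + 0"
    using assms by (intro add_mono sum_mono sum_nonpos) (auto simp: mult_left_le mult_nonneg_nonpos subsetD)
  finally show ?thesis by simp
qed

lemma xc_linear: "xc \<iota> (p + q) k = xc \<iota> p k + xc \<iota> q k" "xc \<iota> (c *\<^sub>R p) k = c * xc \<iota> p k"
  and yc_linear: "yc \<iota> (p + q) k = yc \<iota> p k + yc \<iota> q k" "yc \<iota> (c *\<^sub>R p) k = c * yc \<iota> p k"
  unfolding xc_def yc_def by simp_all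

lemma yc_add: "yc \<iota> (p + q) = (\<lambda>k. yc \<iota> p k + yc \<iota> q k)"
  and yc_scale: "yc \<iota> (c *\<^sub>R p) = (\<lambda>k. c * yc \<iota> p k)"
  by (simp_all add: fun_eq_iff yc_linear)

subsection \<open>Feasible schedules\<close>

definition min_up_time :: "nat \<Rightarrow> nat \<Rightarrow> (nat \<Rightarrow> real) \<Rightarrow> bool" where
  "min_up_time T L z \<longleftrightarrow> (\<forall>t\<in>{2..T}. \<forall>k\<in>{t..min T (t + L - 1)}. - z (t - 1) + z t - z k \<le> 0)"

lemma exists_switch_on:
  fixes z :: "nat \<Rightarrow> real"
  assumes "i < j" "z i = 0" "z j = 1" "\<forall>k\<in>{i..j}. z k \<in> {0, 1}"
  shows "\<exists>a\<in>{i<..j}. z (a - 1) = 0 \<and> z a = 1"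
  using assms
proof (induction j)
  case (Suc j)
  show ?case
  proof (cases "z j = 1 \<and> i < j")
    case True
    then obtain a where "a \<in> {i<..j}" "z (a - 1) = 0" "z a = 1"
      using Suc by auto
    then show ?thesis by auto
  next
    case False
    have "z j \<in> {0, 1}" using Suc.prems(1,4) by simp
    then have "z j = 0" using False Suc.prems(1,2) by (cases "i = j") auto
    then show ?thesis using Suc.prems(1,3) by (intro bexI[of _ "Suc j"]) auto
  qed
qed simp

text \<open>If the unit is off at \<open>j\<close> and switches off at \<open>u \<le> j + L\<close>, it starts up at some
  \<open>a \<in> {j<..u - 1}\<close>, and the minimum up time after \<open>a\<close> keeps it on at \<open>u\<close>.\<close>

lemma min_up_time_reverse:
  fixes z :: "nat \<Rightarrow> real"
  assumes bin: "\<forall>k\<in>{1..T}. z k \<in> {0, 1}" and up: "min_up_time T L z"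
  shows "min_up_time T L (\<lambda>k. z (T + 1 - k))"
  unfolding min_up_time_def
proof (intro ballI, rule ccontr)
  fix t k assume t: "t \<in> {2..T}" and k: "k \<in> {t..min T (t + L - 1)}"
    and viol: "\<not> - z (T + 1 - (t - 1)) + z (T + 1 - t) - z (T + 1 - k) \<le> 0"
  define u where "u = T + 2 - t"
  define j where "j = T + 1 - k"
  have u: "u \<in> {2..T}" "u - 1 = T + 1 - t" "T + 1 - (t - 1) = u" and j: "1 \<le> j" "j < u" "u \<le> j + L"
    using t k unfolding u_def j_def by auto
  have "u \<in> {1..T}" "u - 1 \<in> {1..T}" "j \<in> {1..T}"
    using u j by auto
  then have "z u \<in> {0, 1}" "z (u - 1) \<in> {0, 1}" "z j \<in> {0, 1}"
    using bin by blast+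
  moreover have "z (u - 1) - z u - z j > 0"
    using viol unfolding u(2,3) j_def[symmetric] by simp
  ultimately have "z u = 0" "z (u - 1) = 1" "z j = 0" by auto
  moreover have "j < u - 1"
    using \<open>z (u - 1) = 1\<close> \<open>z j = 0\<close> j by (cases "j = u - 1") auto
  moreover have "\<forall>k\<in>{j..u - 1}. z k \<in> {0, 1}"
    using bin u j by auto
  ultimately obtain a where a: "a \<in> {j<..u - 1}" "z (a - 1) = 0" "z a = 1"
    using exists_switch_on[of j "u - 1" z] by blast
  then have "a \<in> {2..T}" "u \<in> {a..min T (a + L - 1)}"
    using u j by auto
  then have "- z (a - 1) + z a - z u \<le> 0"
    using up unfolding min_up_time_def by blast
  then show False using a \<open>z u = 0\<close> by simp
qed

lemma min_up_time_indicator: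
  assumes "2 \<le> a \<Longrightarrow> a \<le> b \<Longrightarrow> min T (a + L - 1) \<le> b"
  shows "min_up_time T L (indicator {a..b})"
  unfolding min_up_time_def
proof (intro ballI)
  fix t k assume t: "t \<in> {2..T}" and k: "k \<in> {t..min T (t + L - 1)}"
  show "- indicator {a..b} (t - 1) + indicator {a..b} t - indicator {a..b} k \<le> (0::real)"
  proof (cases "t = a \<and> a \<le> b")
    case True
    then have "k \<in> {a..b}" using assms k t by auto
    then show ?thesis by (simp add: indicator_def)
  qed (auto simp: indicator_def)
qed

text \<open>Constraint (ii) is the minimum up time constraint for the complement \<open>1 - y\<close>.\<close>

definition feasible_schedule :: "nat \<Rightarrow> nat \<Rightarrow> nat \<Rightarrow> real \<Rightarrow> real \<Rightarrow> real \<Rightarrow> real \<Rightarrow>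
    (nat \<Rightarrow> real) \<Rightarrow> (nat \<Rightarrow> real) \<Rightarrow> bool" where
  "feasible_schedule T L l Cb Cu V Vb x y \<longleftrightarrow>
     (\<forall>t\<in>{1..T}. y t \<in> {0, 1} \<and> Cu * y t \<le> x t \<and> x t \<le> Cb * y t) \<and>
     min_up_time T L y \<and> min_up_time T l (\<lambda>k. 1 - y k) \<and>
     (\<forall>t\<in>{2..T}. x t - x (t - 1) \<le> V * y (t - 1) + Vb * (1 - y (t - 1)) \<and>
                  x (t - 1) - x t \<le> V * y t + Vb * (1 - y t))"

lemma mem_Pset_iff:
  assumes "Cu > 0"
  shows "p \<in> Pset \<iota> T L l Cb Cu V Vb \<longleftrightarrow> feasible_schedule T L l Cb Cu V Vb (xc \<iota> p) (yc \<iota> p)"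
  unfolding Pset_def feasible_schedule_def min_up_time_def
  using assms by (auto simp: algebra_simps)

lemma feasible_schedule_cong:
  assumes "\<forall>k\<in>{1..T}. x' k = x k" "\<forall>k\<in>{1..T}. y' k = y k"
  shows "feasible_schedule T L l Cb Cu V Vb x' y' = feasible_schedule T L l Cb Cu V Vb x y"
proof -
  have "\<forall>t\<in>{2..T}. t - 1 \<in> {1..T} \<and> t \<in> {1..T}" "\<forall>t\<in>{2..T}. \<forall>k\<in>{t..min T j}. k \<in> {1..T}" for j
    by auto
  then show ?thesis
    unfolding feasible_schedule_def min_up_time_def using assms by (smt (verit, best))
qed

lemma feasible_schedule_reverse:
  assumes "feasible_schedule T L l Cb Cu V Vb x y"
  shows "feasible_schedule T L l Cb Cu V Vb (\<lambda>k. x (T + 1 - k)) (\<lambda>k. y (T + 1 - k))"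
proof -
  have bin: "\<forall>k\<in>{1..T}. y k \<in> {0, 1}" and bin': "\<forall>k\<in>{1..T}. 1 - y k \<in> {0, 1}"
    using assms unfolding feasible_schedule_def by auto
  have reflect: "T + 1 - k \<in> {1..T}" if "k \<in> {1..T}" for k
    using that by auto
  have ramp: "x (T + 1 - t) - x (T + 1 - (t - 1)) \<le> V * y (T + 1 - (t - 1)) + Vb * (1 - y (T + 1 - (t - 1))) \<and>
      x (T + 1 - (t - 1)) - x (T + 1 - t) \<le> V * y (T + 1 - t) + Vb * (1 - y (T + 1 - t))"
    if t: "t \<in> {2..T}" for t
  proof -
    define u where "u = T + 2 - t"
    have "u \<in> {2..T}" "u - 1 = T + 1 - t" "T + 1 - (t - 1) = u"
      using t unfolding u_def by auto
    then show ?thesis using assms unfolding feasible_schedule_def by metis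
  qed
  show ?thesis
    using assms reflect ramp min_up_time_reverse[OF bin] min_up_time_reverse[OF bin']
    unfolding feasible_schedule_def by simp
qed

locale ramping_params =
  fixes T L l :: nat and Cb Cu V Vb :: real
  assumes Cu_pos: "0 < Cu" and V_pos: "0 < V" and Cu_less_Vb: "Cu < Vb" and Vb_V_le_Cb: "Vb + V \<le> Cb"
begin

definition ramp_bound :: "nat set \<Rightarrow> real \<Rightarrow> nat \<Rightarrow> (nat \<Rightarrow> real) \<Rightarrow> real" where
  "ramp_bound S \<eta> t y = (Cb - \<eta> * V) * y t + \<eta> * V * y (t + 1)
     - (\<Sum>s\<in>S. (Cb - Vb - real s * V) * (y (t - s) - y (t - s - 1)))"

lemma ramp_bound_add: "ramp_bound S \<eta> t (\<lambda>k. f k + g k) = ramp_bound S \<eta> t f + ramp_bound S \<eta> t g"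
proof -
  have "(\<Sum>s\<in>S. (Cb - Vb - real s * V) * ((f (t - s) + g (t - s)) - (f (t - s - 1) + g (t - s - 1))))
      = (\<Sum>s\<in>S. (Cb - Vb - real s * V) * (f (t - s) - f (t - s - 1))
          + (Cb - Vb - real s * V) * (g (t - s) - g (t - s - 1)))"
    by (rule sum.cong) (simp_all add: algebra_simps)
  then show ?thesis unfolding ramp_bound_def sum.distrib by (simp add: algebra_simps)
qed

lemma ramp_bound_scale: "ramp_bound S \<eta> t (\<lambda>k. c * f k) = c * ramp_bound S \<eta> t f"
  unfolding ramp_bound_def by (simp add: sum_distrib_left algebra_simps)

lemma interval_schedule_feasible:
  fixes \<phi> :: "nat \<Rightarrow> real"
  assumes "1 \<le> a" "b \<le> T"
    and min_up: "2 \<le> a \<Longrightarrow> a \<le> b \<Longrightarrow> min T (a + L - 1) \<le> b"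
    and level: "\<forall>j\<in>{a..b}. Cu \<le> \<phi> j \<and> \<phi> j \<le> Cb"
    and startup: "2 \<le> a \<Longrightarrow> a \<le> b \<Longrightarrow> \<phi> a \<le> Vb"
    and shutdown: "b < T \<Longrightarrow> a \<le> b \<Longrightarrow> \<phi> b \<le> Vb"
    and ramp: "\<forall>j\<in>{a<..b}. \<bar>\<phi> j - \<phi> (j - 1)\<bar> \<le> V"
  shows "feasible_schedule T L l Cb Cu V Vb (\<lambda>j. \<phi> j * indicator {a..b} j) (indicator {a..b})"
proof -
  have "min_up_time T L (indicator {a..b})"
    using min_up by (rule min_up_time_indicator)
  moreover have "min_up_time T l (\<lambda>k. 1 - indicator {a..b} k)"
    unfolding min_up_time_def by (auto simp: indicator_def)
  moreover have "\<phi> t * indicator {a..b} t - \<phi> (t - 1) * indicator {a..b} (t - 1)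
      \<le> V * indicator {a..b} (t - 1) + Vb * (1 - indicator {a..b} (t - 1)) \<and>
    \<phi> (t - 1) * indicator {a..b} (t - 1) - \<phi> t * indicator {a..b} t
      \<le> V * indicator {a..b} t + Vb * (1 - indicator {a..b} t)" if t: "t \<in> {2..T}" for t
  proof (cases "t - 1 \<in> {a..b}"; cases "t \<in> {a..b}")
    assume "t - 1 \<in> {a..b}" "t \<in> {a..b}"
    moreover from this have "t \<in> {a<..b}" using t by auto
    ultimately show ?thesis using ramp by (simp add: abs_le_iff)
  next
    assume "t - 1 \<in> {a..b}" "t \<notin> {a..b}"
    then have "t - 1 = b" "b < T" "Cu \<le> \<phi> b" using level t by auto
    then show ?thesis using shutdown Cu_pos V_pos \<open>t - 1 \<in> {a..b}\<close> \<open>t \<notin> {a..b}\<close> by auto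
  next
    assume "t - 1 \<notin> {a..b}" "t \<in> {a..b}"
    then have "t = a" "2 \<le> a" "Cu \<le> \<phi> a" using level t by auto
    then show ?thesis using startup Cu_pos V_pos \<open>t - 1 \<notin> {a..b}\<close> \<open>t \<in> {a..b}\<close> by auto
  next
    assume "t - 1 \<notin> {a..b}" "t \<notin> {a..b}"
    then show ?thesis using Cu_pos Cu_less_Vb by auto
  qed
  ultimately show ?thesis
    using level Cu_pos unfolding feasible_schedule_def by (auto simp: indicator_def)
qed

lemma constant_schedule_feasible:
  assumes "1 \<le> a" "b \<le> T" "2 \<le> a \<Longrightarrow> a \<le> b \<Longrightarrow> min T (a + L - 1) \<le> b"
    and "Cu \<le> c" "c \<le> Cb" "2 \<le> a \<or> b < T \<Longrightarrow> c \<le> Vb"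
  shows "feasible_schedule T L l Cb Cu V Vb (\<lambda>j. c * indicator {a..b} j) (indicator {a..b})"
  using assms V_pos by (intro interval_schedule_feasible) auto

lemma ramp_up_schedule_feasible:
  assumes "2 \<le> a" "a \<le> T" "real m * V \<le> Cb - Vb"
  shows "feasible_schedule T L l Cb Cu V Vb
    (\<lambda>j. (Vb + real (min (j - a) m) * V) * indicator {a..T} j) (indicator {a..T})"
proof (rule interval_schedule_feasible)
  show "\<forall>j\<in>{a..T}. Cu \<le> Vb + real (min (j - a) m) * V \<and> Vb + real (min (j - a) m) * V \<le> Cb"
  proof
    fix j
    have "0 \<le> real (min (j - a) m) * V" "real (min (j - a) m) * V \<le> real m * V"
      using V_pos by (auto intro: mult_right_mono)
    then show "Cu \<le> Vb + real (min (j - a) m) * V \<and> Vb + real (min (j - a) m) * V \<le> Cb"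
      using assms(3) Cu_less_Vb by linarith
  qed
  have "min (j - a) m = min (j - 1 - a) m \<or> min (j - a) m = min (j - 1 - a) m + 1" if "j \<in> {a<..T}" for j
    using that by auto
  then show "\<forall>j\<in>{a<..T}. \<bar>Vb + real (min (j - a) m) * V - (Vb + real (min (j - 1 - a) m) * V)\<bar> \<le> V"
    using V_pos by (force simp: algebra_simps)
qed (use assms in auto)

end

subsection \<open>Validity\<close>

locale schedule = ramping_params +
  fixes x y :: "nat \<Rightarrow> real"
  assumes feasible: "feasible_schedule T L l Cb Cu V Vb x y"
begin

lemma output_limits: "k \<in> {1..T} \<Longrightarrow> y k \<in> {0, 1} \<and> Cu * y k \<le> x k \<and> x k \<le> Cb * y k"
  using feasible unfolding feasible_schedule_def by blast

lemma ramp_limits: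
  "k \<in> {2..T} \<Longrightarrow> x k - x (k - 1) \<le> V * y (k - 1) + Vb * (1 - y (k - 1)) \<and>
     x (k - 1) - x k \<le> V * y k + Vb * (1 - y k)"
  using feasible unfolding feasible_schedule_def by blast

lemma on_or_off: "k \<in> {1..T} \<Longrightarrow> y k = 0 \<or> y k = 1"
  using output_limits by blast

lemma x_eq_0_if_off: "k \<in> {1..T} \<Longrightarrow> y k = 0 \<Longrightarrow> x k = 0"
  using output_limits[of k] by simp

lemma x_le_Cb: "k \<in> {1..T} \<Longrightarrow> x k \<le> Cb"
  using output_limits[of k] on_or_off[of k] Cu_pos Cu_less_Vb Vb_V_le_Cb V_pos by auto

lemma on_after_startup:
  assumes "a \<in> {2..T}" "y (a - 1) = 0" "y a = 1" "k \<in> {a..min T (a + L - 1)}"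
  shows "y k = 1"
proof -
  have "- y (a - 1) + y a - y k \<le> 0"
    using feasible assms(1,4) unfolding feasible_schedule_def min_up_time_def by blast
  then show ?thesis using assms(2,3) on_or_off[of k] assms(1,4) by auto
qed

lemma x_le_Vb_before_shutdown:
  assumes "k \<in> {1..<T}" "y (k + 1) = 0"
  shows "x k \<le> Vb"
  using ramp_limits[of "k + 1"] x_eq_0_if_off[of "k + 1"] assms by simp

lemma x_le_ramp_up:
  assumes "2 \<le> a" "a + j \<le> T" "y (a - 1) = 0" "\<forall>k\<in>{a..a + j}. y k = 1"
  shows "x (a + j) \<le> Vb + real j * V"
  using assms
proof (induction j)
  case 0
  then have "a - 1 \<in> {1..T}" by auto
  then have "x (a - 1) = 0" using x_eq_0_if_off 0 by blast
  then show ?case using ramp_limits[of a] 0 by simp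
next
  case (Suc j)
  then have "x (a + Suc j) - x (a + j) \<le> V"
    using ramp_limits[of "a + Suc j"] by simp
  then show ?case using Suc by (simp add: algebra_simps)
qed

lemma startup_in_window:
  assumes "s + 2 \<le> t" "s + 1 \<le> L" "t \<le> T" "y (t - s) - y (t - s - 1) = 1"
  shows "y (t - s - 1) = 0 \<and> (\<forall>k\<in>{t - s..t}. y k = 1)"
proof -
  have "y (t - s - 1) = 0" "y (t - s) = 1"
    using on_or_off[of "t - s"] on_or_off[of "t - s - 1"] assms by force+
  moreover have "{t - s..t} \<subseteq> {t - s..min T (t - s + L - 1)}" "t - s \<in> {2..T}"
    using assms by auto
  ultimately show ?thesis using on_after_startup[of "t - s"] by (simp add: subset_iff)
qed

lemma startups_in_window_unique:
  assumes "t \<le> T" "\<forall>s\<in>A. s + 2 \<le> t \<and> s + 1 \<le> L \<and> y (t - s) - y (t - s - 1) = 1"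
  shows "A = {} \<or> (\<exists>s0. A = {s0})"
proof -
  have False if "u \<in> A" "v \<in> A" "u < v" for u v
  proof -
    have u: "u + 2 \<le> t \<and> u + 1 \<le> L \<and> y (t - u) - y (t - u - 1) = 1"
      and v: "v + 2 \<le> t \<and> v + 1 \<le> L \<and> y (t - v) - y (t - v - 1) = 1"
      using assms(2) that(1,2) by blast+
    have "y (t - u - 1) = 0" "\<forall>k\<in>{t - v..t}. y k = 1"
      using startup_in_window[of u t] startup_in_window[of v t] u v assms(1) by blast+
    moreover have "t - u - 1 \<in> {t - v..t}" using \<open>u < v\<close> by auto
    ultimately show False by simp
  qed
  then have "u = v" if "u \<in> A" "v \<in> A" for u v
    using that by (metis linorder_neqE_nat)
  then show ?thesis by blast
qed

lemma x_le_bound_without_startup: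
  assumes "t \<in> {1..<T}" "y t = 1" "\<eta> * V \<le> Cb - Vb"
  shows "x t \<le> (Cb - \<eta> * V) * y t + \<eta> * V * y (t + 1)"
  using assms on_or_off[of "t + 1"] x_le_Cb[of t] x_le_Vb_before_shutdown[of t] by auto

lemma x_le_bound_after_startup:
  assumes "s + 2 \<le> t" "s + 1 \<le> L" "t + 1 \<le> T" "\<eta> \<le> real L - 1"
    and "y (t - s - 1) = 0" "\<forall>k\<in>{t - s..t}. y k = 1"
  shows "x t + (Cb - Vb - real s * V) \<le> (Cb - \<eta> * V) * y t + \<eta> * V * y (t + 1)"
proof -
  have on: "y t = 1" using assms(1,6) by auto
  have ramp: "x t \<le> Vb + real s * V"
    using x_le_ramp_up[of "t - s" s] assms by force
  show ?thesis
  proof (cases "y (t + 1) = 1")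
    case True
    then show ?thesis using on ramp by simp
  next
    case False
    then have "y (t + 1) = 0" using on_or_off[of "t + 1"] assms(3) by auto
    then have "\<not> t + 1 \<le> t - s + L - 1"
      using on_after_startup[of "t - s" "t + 1"] assms by force
    then have "\<eta> \<le> real s" using assms(1,2,4) by auto
    then have "\<eta> * V \<le> real s * V" using V_pos by (simp add: mult_right_mono)
    then show ?thesis
      using on \<open>y (t + 1) = 0\<close> x_le_Vb_before_shutdown[of t] assms(1,3) by simp
  qed
qed

lemma ramp_bound_valid:
  assumes t: "1 \<le> t" "t + 1 \<le> T"
    and S: "\<forall>s\<in>S. s + 2 \<le> t \<and> s + 1 \<le> L \<and> real s * V \<le> Cb - Vb"
    and \<eta>: "0 \<le> \<eta>" "\<eta> \<le> real L - 1" "\<eta> * V \<le> Cb - Vb"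
  shows "x t \<le> ramp_bound S \<eta> t y"
proof -
  define c where "c s = Cb - Vb - real s * V" for s
  define d where "d s = y (t - s) - y (t - s - 1)" for s
  define startups where "startups = {s \<in> S. d s = 1}"
  have startup: "y (t - s - 1) = 0 \<and> (\<forall>k\<in>{t - s..t}. y k = 1)" if "s \<in> startups" for s
    using that S t startup_in_window[of s t] unfolding startups_def d_def by auto
  have "startups = {} \<or> (\<exists>s0. startups = {s0})"
    using S t unfolding startups_def d_def by (intro startups_in_window_unique[of t]) auto
  then consider (none) "startups = {}" | (one) s0 where "startups = {s0}" by blast
  note startups_cases = this
  have "finite S" using S by (intro finite_subset[of S "{..L}"]) auto
  moreover have "d s \<in> {-1, 0, 1}" if "s \<in> S" for s
    using on_or_off[of "t - s"] on_or_off[of "t - s - 1"] S that t unfolding d_def by force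
  ultimately have "(\<Sum>s\<in>S. c s * d s) \<le> sum c startups"
    using S V_pos by (intro sum_mult_le_sum_subset) (force simp: startups_def c_def)+
  moreover have "x t + sum c startups \<le> (Cb - \<eta> * V) * y t + \<eta> * V * y (t + 1)"
  proof (cases "y t = 0")
    case True
    then have "startups = {}" using startup t by fastforce
    then show ?thesis
      using True x_eq_0_if_off[of t] on_or_off[of "t + 1"] \<eta>(1) V_pos t by auto
  next
    case False
    then have "y t = 1" using on_or_off[of t] t by auto
    then show ?thesis
    proof (cases rule: startups_cases)
      case none
      then show ?thesis using x_le_bound_without_startup \<open>y t = 1\<close> \<eta>(3) t by simp
    next
      case (one s0)
      then have "s0 \<in> S" "y (t - s0 - 1) = 0 \<and> (\<forall>k\<in>{t - s0..t}. y k = 1)"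
        using startup startups_def by auto
      then show ?thesis
        using one x_le_bound_after_startup[of s0] S \<eta>(2) t unfolding c_def by simp
    qed
  qed
  ultimately show ?thesis unfolding ramp_bound_def c_def d_def by linarith
qed

end

subsection \<open>Points of the polytope as schedules\<close>

locale indexed_ramping = ramping_params +
  fixes \<iota> :: "nat \<Rightarrow> 'n::finite"
  assumes bij: "bij_betw \<iota> {1..T} (UNIV :: 'n set)"
begin

abbreviation \<P> where "\<P> \<equiv> Pset \<iota> T L l Cb Cu V Vb"

lemma index_cases:
  obtains k where "k \<in> {1..T}" "i = \<iota> k"
  using bij_betw_imp_surj_on[OF bij] by (metis UNIV_I imageE)

lemma index_eq_iff: "k \<in> {1..T} \<Longrightarrow> k' \<in> {1..T} \<Longrightarrow> \<iota> k = \<iota> k' \<longleftrightarrow> k = k'"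
  using bij_betw_imp_inj_on[OF bij] by (auto dest: inj_onD)

definition vec_of :: "(nat \<Rightarrow> real) \<Rightarrow> real^'n" where
  "vec_of f = (\<chi> i. f (inv_into {1..T} \<iota> i))"

definition point_of :: "(nat \<Rightarrow> real) \<Rightarrow> (nat \<Rightarrow> real) \<Rightarrow> (real^'n) \<times> (real^'n)" where
  "point_of f g = (vec_of f, vec_of g)"

lemma vec_of_nth [simp]: "k \<in> {1..T} \<Longrightarrow> vec_of f $ \<iota> k = f k"
  unfolding vec_of_def using bij by (simp add: bij_betw_imp_inj_on)

lemma vec_eq_on_periods:
  assumes "\<And>k. k \<in> {1..T} \<Longrightarrow> v $ \<iota> k = w $ \<iota> k"
  shows "v = w"
proof -
  have "v $ i = w $ i" for i
    using assms by (cases rule: index_cases[of i]) simp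
  then show ?thesis by (simp add: vec_eq_iff)
qed

lemma point_eqI:
  "(\<And>k. k \<in> {1..T} \<Longrightarrow> xc \<iota> p k = xc \<iota> q k) \<Longrightarrow>
    (\<And>k. k \<in> {1..T} \<Longrightarrow> yc \<iota> p k = yc \<iota> q k) \<Longrightarrow> p = q"
  using vec_eq_on_periods[of "fst p" "fst q"] vec_eq_on_periods[of "snd p" "snd q"]
  unfolding xc_def yc_def by (simp add: prod_eq_iff)

lemma xc_point_of [simp]: "k \<in> {1..T} \<Longrightarrow> xc \<iota> (point_of f g) k = f k"
  and yc_point_of [simp]: "k \<in> {1..T} \<Longrightarrow> yc \<iota> (point_of f g) k = g k"
  unfolding xc_def yc_def point_of_def by simp_all

lemma point_of_in_\<P>:
  assumes "feasible_schedule T L l Cb Cu V Vb f g"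
  shows "point_of f g \<in> \<P>"
proof -
  have "feasible_schedule T L l Cb Cu V Vb (xc \<iota> (point_of f g)) (yc \<iota> (point_of f g))"
    using assms feasible_schedule_cong[of T "xc \<iota> (point_of f g)" f "yc \<iota> (point_of f g)" g] by simp
  then show ?thesis using Cu_pos by (simp add: mem_Pset_iff)
qed

lemma linear_ramp_bound: "linear (\<lambda>p. ramp_bound S \<eta> t (yc \<iota> p) - xc \<iota> p t)"
  by (rule linearI) (simp_all add: yc_add yc_scale ramp_bound_add ramp_bound_scale xc_linear algebra_simps)

definition time_reversal :: "(real^'n) \<times> (real^'n) \<Rightarrow> (real^'n) \<times> (real^'n)" where
  "time_reversal p = point_of (\<lambda>k. xc \<iota> p (T + 1 - k)) (\<lambda>k. yc \<iota> p (T + 1 - k))"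

lemma xc_time_reversal: "k \<in> {1..T} \<Longrightarrow> xc \<iota> (time_reversal p) k = xc \<iota> p (T + 1 - k)"
  and yc_time_reversal: "k \<in> {1..T} \<Longrightarrow> yc \<iota> (time_reversal p) k = yc \<iota> p (T + 1 - k)"
  unfolding time_reversal_def by simp_all

lemma time_reversal_involutive: "time_reversal (time_reversal p) = p"
proof (rule point_eqI)
  fix k assume k: "k \<in> {1..T}"
  then have "T + 1 - k \<in> {1..T}" "T + 1 - (T + 1 - k) = k" by auto
  with k show "xc \<iota> (time_reversal (time_reversal p)) k = xc \<iota> p k"
    and "yc \<iota> (time_reversal (time_reversal p)) k = yc \<iota> p k"
    by (simp_all add: xc_time_reversal yc_time_reversal)
qed

lemma linear_time_reversal: "linear time_reversal"
  by (rule linearI; rule point_eqI) (simp_all add: xc_time_reversal yc_time_reversal xc_linear yc_linear)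

lemma inj_time_reversal: "inj time_reversal"
  by (metis injI time_reversal_involutive)

lemma time_reversal_\<P>: "time_reversal ` \<P> = \<P>"
proof -
  have reversed: "time_reversal p \<in> \<P>" if "p \<in> \<P>" for p
  proof -
    have "feasible_schedule T L l Cb Cu V Vb (\<lambda>k. xc \<iota> p (T + 1 - k)) (\<lambda>k. yc \<iota> p (T + 1 - k))"
      using that Cu_pos by (intro feasible_schedule_reverse) (simp add: mem_Pset_iff)
    then show ?thesis unfolding time_reversal_def by (rule point_of_in_\<P>)
  qed
  moreover have "p \<in> time_reversal ` \<P>" if "p \<in> \<P>" for p
    using reversed[OF that] time_reversal_involutive[of p] by (metis image_eqI)
  ultimately show ?thesis by blast
qed

lemma time_reversal_convex_hull: "time_reversal ` (convex hull \<P>) = convex hull \<P>"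
  by (simp add: convex_hull_linear_image linear_time_reversal time_reversal_\<P>)

lemma xc_time_reversal_at:
  assumes "t \<in> {1..T}"
  shows "(\<lambda>p. xc \<iota> (time_reversal p) (T + 1 - t)) = (\<lambda>p. xc \<iota> p t)"
proof -
  have "T + 1 - t \<in> {1..T}" "T + 1 - (T + 1 - t) = t" using assms by auto
  then show ?thesis by (simp add: xc_time_reversal)
qed

lemma ramp_bound_time_reversal:
  assumes t: "t \<in> {2..T}" and S: "\<forall>s\<in>S. t + s + 1 \<le> T"
  shows "(\<lambda>p. ramp_bound S \<eta> (T + 1 - t) (yc \<iota> (time_reversal p)))
    = (\<lambda>p. (Cb - \<eta> * V) * yc \<iota> p t + \<eta> * V * yc \<iota> p (t - 1)
      - (\<Sum>s\<in>S. (Cb - Vb - real s * V) * (yc \<iota> p (t + s) - yc \<iota> p (t + s + 1))))"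
proof (rule ext)
  fix p
  have "yc \<iota> (time_reversal p) (T + 1 - t - s) = yc \<iota> p (t + s)"
    "yc \<iota> (time_reversal p) (T + 1 - t - s - 1) = yc \<iota> p (t + s + 1)" if "s \<in> S" for s
  proof -
    have "T + 1 - t - s \<in> {1..T}" "T + 1 - (T + 1 - t - s) = t + s"
      "T + 1 - t - s - 1 \<in> {1..T}" "T + 1 - (T + 1 - t - s - 1) = t + s + 1"
      using that S t by auto
    then show "yc \<iota> (time_reversal p) (T + 1 - t - s) = yc \<iota> p (t + s)"
      "yc \<iota> (time_reversal p) (T + 1 - t - s - 1) = yc \<iota> p (t + s + 1)"
      by (simp_all add: yc_time_reversal)
  qed
  moreover have "T + 1 - t \<in> {1..T}" "T + 1 - (T + 1 - t) = t"
    "T + 1 - t + 1 \<in> {1..T}" "T + 1 - (T + 1 - t + 1) = t - 1"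
    using t by auto
  ultimately show "ramp_bound S \<eta> (T + 1 - t) (yc \<iota> (time_reversal p))
    = (Cb - \<eta> * V) * yc \<iota> p t + \<eta> * V * yc \<iota> p (t - 1)
      - (\<Sum>s\<in>S. (Cb - Vb - real s * V) * (yc \<iota> p (t + s) - yc \<iota> p (t + s + 1)))"
    unfolding ramp_bound_def by (simp add: yc_time_reversal cong: sum.cong)
qed

lemma valid_ineq_time_reversal:
  assumes "t \<in> {2..T}" "\<forall>s\<in>S. t + s + 1 \<le> T"
    and "valid_ineq (convex hull \<P>) (\<lambda>p. xc \<iota> p (T + 1 - t)) (\<lambda>p. ramp_bound S \<eta> (T + 1 - t) (yc \<iota> p))"
  shows "valid_ineq (convex hull \<P>) (\<lambda>p. xc \<iota> p t)
    (\<lambda>p. (Cb - \<eta> * V) * yc \<iota> p t + \<eta> * V * yc \<iota> p (t - 1)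
      - (\<Sum>s\<in>S. (Cb - Vb - real s * V) * (yc \<iota> p (t + s) - yc \<iota> p (t + s + 1))))"
proof -
  have "t \<in> {1..T}" using assms(1) by auto
  with valid_ineq_comp[OF equalityD1[OF time_reversal_convex_hull] assms(3)] show ?thesis
    unfolding xc_time_reversal_at[OF \<open>t \<in> {1..T}\<close>] ramp_bound_time_reversal[OF assms(1,2)] by simp
qed

lemma facet_defining_time_reversal:
  assumes "t \<in> {2..T}" "\<forall>s\<in>S. t + s + 1 \<le> T"
    and "facet_defining (convex hull \<P>) (\<lambda>p. xc \<iota> p (T + 1 - t)) (\<lambda>p. ramp_bound S \<eta> (T + 1 - t) (yc \<iota> p))"
  shows "facet_defining (convex hull \<P>) (\<lambda>p. xc \<iota> p t)
    (\<lambda>p. (Cb - \<eta> * V) * yc \<iota> p t + \<eta> * V * yc \<iota> p (t - 1)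
      - (\<Sum>s\<in>S. (Cb - Vb - real s * V) * (yc \<iota> p (t + s) - yc \<iota> p (t + s + 1))))"
proof -
  have "t \<in> {1..T}" using assms(1) by auto
  with facet_defining_linear_automorphism[OF linear_time_reversal inj_time_reversal
      time_reversal_convex_hull assms(3)] show ?thesis
    unfolding xc_time_reversal_at[OF \<open>t \<in> {1..T}\<close>] ramp_bound_time_reversal[OF assms(1,2)] by simp
qed

end

subsection \<open>Spanning the whole space\<close>

context indexed_ramping
begin

definition full_output :: "(real^'n) \<times> (real^'n)" where
  "full_output = point_of (\<lambda>j. Cb * indicator {1..T} j) (indicator {1..T})"

definition reduced_output :: "nat \<Rightarrow> (real^'n) \<times> (real^'n)" where
  "reduced_output k = point_of (\<lambda>j. (Cb - (if j = k then V else 0)) * indicator {1..T} j) (indicator {1..T})"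

definition full_output_points :: "((real^'n) \<times> (real^'n)) set" where
  "full_output_points = insert full_output (reduced_output ` {1..T})"

definition on_from :: "nat \<Rightarrow> real^'n" where
  "on_from k = vec_of (indicator {k..T})"

text \<open>Once \<open>X\<close> contains the full-output points, the span of \<open>X - full_output\<close> contains
  every \<open>(v, 0)\<close>, so it is determined by its commitment part \<open>y_span X\<close>.\<close>

definition y_span :: "((real^'n) \<times> (real^'n)) set \<Rightarrow> (real^'n) set" where
  "y_span X = {v. (0, v) \<in> span ((\<lambda>p. p - full_output) ` X)}"

lemma full_output_points_subset_\<P>: "full_output_points \<subseteq> \<P>"
proof -
  have "full_output \<in> \<P>"
    unfolding full_output_def using Cu_less_Vb Vb_V_le_Cb V_pos
    by (intro point_of_in_\<P> constant_schedule_feasible) auto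
  moreover have "reduced_output k \<in> \<P>" for k
    unfolding reduced_output_def using Cu_less_Vb Vb_V_le_Cb V_pos
    by (intro point_of_in_\<P> interval_schedule_feasible) auto
  ultimately show ?thesis unfolding full_output_points_def by blast
qed

lemma prefix_point_in_\<P>:
  "k \<in> {1..T} \<Longrightarrow> point_of (\<lambda>j. Cu * indicator {1..k - 1} j) (indicator {1..k - 1}) \<in> \<P>"
  using Cu_less_Vb Vb_V_le_Cb V_pos by (intro point_of_in_\<P> constant_schedule_feasible) auto

lemma suffix_point_in_\<P>:
  "k \<in> {2..T} \<Longrightarrow> point_of (\<lambda>j. Cu * indicator {k..T} j) (indicator {k..T}) \<in> \<P>"
  using Cu_less_Vb Vb_V_le_Cb V_pos by (intro point_of_in_\<P> constant_schedule_feasible) auto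

lemma vec_of_indicator_split:
  assumes "a \<le> Suc b" "b \<le> T"
  shows "vec_of (indicator {a..b}) = on_from a - on_from (Suc b)"
  unfolding on_from_def using assms by (intro vec_eq_on_periods) (auto simp: indicator_def)

lemma on_from_beyond: "on_from (Suc T) = 0"
  unfolding on_from_def by (intro vec_eq_on_periods) (simp add: indicator_def)

lemma subspace_y_span: "subspace (y_span X)"
proof -
  have "linear (\<lambda>v::real^'n. (0::real^'n, v))"
    by (rule linearI) simp_all
  then have "subspace ((\<lambda>v::real^'n. (0::real^'n, v)) -` span ((\<lambda>p. p - full_output) ` X))"
    by (intro real_vector.linear_subspace_vimage subspace_span)
  then show ?thesis unfolding y_span_def vimage_def .
qed

lemma x_directions_in_span:
  assumes "full_output_points \<subseteq> X"
  shows "(v, 0) \<in> span ((\<lambda>p. p - full_output) ` X)"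
proof -
  let ?D = "span ((\<lambda>p. p - full_output) ` X)"
  have axis_in_span: "(axis (\<iota> k) 1, 0) \<in> ?D" if k: "k \<in> {1..T}" for k
  proof -
    have "reduced_output k - full_output = (- V) *\<^sub>R (axis (\<iota> k) 1, 0)"
      using k by (intro point_eqI) (auto simp: reduced_output_def full_output_def point_of_def
          xc_def yc_def axis_def indicator_def index_eq_iff)
    moreover have "reduced_output k - full_output \<in> ?D"
      using assms k unfolding full_output_points_def by (intro span_base imageI) auto
    ultimately have "(- 1 / V) *\<^sub>R ((- V) *\<^sub>R (axis (\<iota> k) 1, 0)) \<in> ?D"
      by (metis span_mul)
    then show ?thesis using V_pos by simp
  qed
  have "(axis i 1, 0) \<in> ?D" for i
    using axis_in_span by (cases rule: index_cases[of i]) simp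
  then have "span ((\<lambda>u. (u, 0)) ` Basis) \<subseteq> ?D"
    by (intro span_minimal subspace_span) (auto simp: Basis_vec_def)
  moreover have "linear (\<lambda>u::real^'n. (u, 0::real^'n))"
    by (rule linearI) simp_all
  then have "(v, 0) \<in> span ((\<lambda>u. (u, 0::real^'n)) ` Basis)"
    by (simp add: linear_span_image span_Basis)
  ultimately show ?thesis by blast
qed

lemma y_span_point_of:
  assumes "full_output_points \<subseteq> X" "point_of f g \<in> X"
  shows "vec_of g - on_from 1 \<in> y_span X"
proof -
  let ?D = "span ((\<lambda>p. p - full_output) ` X)"
  let ?u = "vec_of f - vec_of (\<lambda>j. Cb * indicator {1..T} j)"
  have "point_of f g - full_output \<in> ?D"
    using assms(2) by (intro span_base imageI)
  moreover have "(?u, 0) \<in> ?D"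
    using assms(1) by (rule x_directions_in_span)
  ultimately have "(point_of f g - full_output) - (?u, 0) \<in> ?D"
    by (rule span_diff)
  then show ?thesis
    unfolding y_span_def full_output_def point_of_def on_from_def by simp
qed

lemma on_from_diff_in_y_span:
  assumes "full_output_points \<subseteq> X" "point_of f (indicator {a..b}) \<in> X" "a \<le> Suc b" "b \<le> T"
  shows "on_from a - on_from (Suc b) - on_from 1 \<in> y_span X"
  using y_span_point_of[OF assms(1,2)] vec_of_indicator_split[OF assms(3,4)] by simp

lemma on_from_in_y_span_if_prefix:
  assumes "full_output_points \<subseteq> X" "point_of f (indicator {1..k - 1}) \<in> X" "k \<in> {1..T}"
  shows "on_from k \<in> y_span X"
proof -
  have "on_from 1 - on_from k - on_from 1 \<in> y_span X"
    using on_from_diff_in_y_span[OF assms(1,2)] assms(3) by force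
  then have "- (on_from 1 - on_from k - on_from 1) \<in> y_span X"
    by (rule subspace_neg[OF subspace_y_span])
  then show ?thesis by simp
qed

lemma on_from_in_y_span_iff:
  assumes "full_output_points \<subseteq> X" "on_from 1 \<in> y_span X"
    and "point_of f (indicator {a..b}) \<in> X" "a \<le> Suc b" "b \<le> T"
  shows "on_from a \<in> y_span X \<longleftrightarrow> on_from (Suc b) \<in> y_span X"
proof -
  have "(on_from a - on_from (Suc b) - on_from 1) + on_from 1 \<in> y_span X"
    using on_from_diff_in_y_span[OF assms(1,3-5)] assms(2) subspace_y_span by (intro subspace_add)
  then have "on_from a - on_from (Suc b) \<in> y_span X" by simp
  then show ?thesis
    using subspace_y_span subspace_diff[of "y_span X" "on_from a" "on_from a - on_from (Suc b)"]
      subspace_add[of "y_span X" "on_from a - on_from (Suc b)" "on_from (Suc b)"] by auto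
qed

lemma on_from_in_y_span_if_suffix:
  assumes "full_output_points \<subseteq> X" "on_from 1 \<in> y_span X"
    and "point_of f (indicator {a..T}) \<in> X" "a \<le> Suc T"
  shows "on_from a \<in> y_span X"
  using on_from_in_y_span_iff[OF assms(1-4)] subspace_y_span on_from_beyond
  by (simp add: subspace_0)

lemma affine_hull_eq_UNIV_if_on_from:
  assumes X: "full_output_points \<subseteq> X" and on_from: "\<forall>k\<in>{1..T}. on_from k \<in> y_span X"
  shows "affine hull X = UNIV"
proof -
  let ?D = "span ((\<lambda>p. p - full_output) ` X)"
  have "axis (\<iota> k) 1 \<in> y_span X" if k: "k \<in> {1..T}" for k
  proof -
    have "on_from (Suc k) \<in> y_span X"
      using on_from k on_from_beyond subspace_y_span by (cases "k = T") (auto simp: subspace_0)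
    moreover have "axis (\<iota> k) 1 = on_from k - on_from (Suc k)"
      unfolding on_from_def using k
      by (intro vec_eq_on_periods) (auto simp: axis_def indicator_def index_eq_iff)
    ultimately show ?thesis using on_from k subspace_y_span by (simp add: subspace_diff)
  qed
  then have "axis i 1 \<in> y_span X" for i
    by (cases rule: index_cases[of i]) simp
  then have "span Basis \<subseteq> y_span X"
    using subspace_y_span by (intro span_minimal) (auto simp: Basis_vec_def)
  then have "(0, w) \<in> ?D" for w
    unfolding y_span_def by (auto simp: span_Basis)
  moreover have "(v, 0) \<in> ?D" for v
    using X by (rule x_directions_in_span)
  ultimately have "(v, 0) + (0, w) \<in> ?D" for v w
    by (intro span_add)
  then have D: "?D = UNIV"
    by (metis UNIV_eq_I add_Pair add_0 add_0_right prod.collapse)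
  have "full_output \<in> affine hull X"
    using X unfolding full_output_points_def by (auto intro: hull_inc)
  then have "affine hull X = (\<lambda>x. full_output + x) ` span ((\<lambda>x. - full_output + x) ` X)"
    by (rule affine_hull_span_gen)
  also have "(\<lambda>x. - full_output + x) = (\<lambda>p. p - full_output)"
    by (simp add: fun_eq_iff)
  finally show ?thesis
    unfolding D by simp
qed

lemma affine_hull_\<P>: "affine hull \<P> = UNIV"
proof (rule affine_hull_eq_UNIV_if_on_from[OF full_output_points_subset_\<P>], intro ballI)
  fix k assume "k \<in> {1..T}"
  then show "on_from k \<in> y_span \<P>"
    using prefix_point_in_\<P> on_from_in_y_span_if_prefix[OF full_output_points_subset_\<P>] by blast
qed

end

subsection \<open>The facet\<close>

locale ramp_inequality = indexed_ramping +
  fixes S :: "nat set" and \<eta> :: real and t :: nat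
  assumes t_range: "1 \<le> t" "t + 1 \<le> T"
    and S_range: "\<forall>s\<in>S. s + 2 \<le> t \<and> s + 1 \<le> L \<and> real s * V \<le> Cb - Vb"
    and \<eta>_range: "0 \<le> \<eta>" "\<eta> \<le> real L - 1" "\<eta> * V \<le> Cb - Vb"
begin

lemma finite_S: "finite S"
  using S_range by (intro finite_subset[of S "{..L}"]) auto

lemma t_minus_1_notin_S: "t - 1 \<notin> S"
  using S_range by force

lemma ramp_bound_valid_on_\<P>: "\<forall>p\<in>\<P>. xc \<iota> p t \<le> ramp_bound S \<eta> t (yc \<iota> p)"
proof
  fix p assume "p \<in> \<P>"
  then interpret schedule T L l Cb Cu V Vb "xc \<iota> p" "yc \<iota> p"
    using Cu_pos by unfold_locales (simp add: mem_Pset_iff)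
  show "xc \<iota> p t \<le> ramp_bound S \<eta> t (yc \<iota> p)"
    using t_range S_range \<eta>_range by (rule ramp_bound_valid)
qed

lemma ramp_bound_valid_ineq:
  "valid_ineq (convex hull \<P>) (\<lambda>p. xc \<iota> p t) (\<lambda>p. ramp_bound S \<eta> t (yc \<iota> p))"
  using linear_ramp_bound ramp_bound_valid_on_\<P> by (rule valid_ineq_convex_hull)

lemma ramp_bound_cong:
  assumes "\<And>k. k \<in> {1..T} \<Longrightarrow> y k = y' k"
  shows "ramp_bound S \<eta> t y = ramp_bound S \<eta> t y'"
proof -
  have "t - s \<in> {1..T}" "t - s - 1 \<in> {1..T}" if "s \<in> S" for s
    using that S_range t_range by force+
  then have "(\<Sum>s\<in>S. (Cb - Vb - real s * V) * (y (t - s) - y (t - s - 1)))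
      = (\<Sum>s\<in>S. (Cb - Vb - real s * V) * (y' (t - s) - y' (t - s - 1)))"
    using assms by (intro sum.cong) auto
  moreover have "t \<in> {1..T}" "t + 1 \<in> {1..T}"
    using t_range by auto
  ultimately show ?thesis
    unfolding ramp_bound_def using assms by presburger
qed

lemma ramp_bound_indicator:
  assumes "a \<le> Suc b" and no_shutdown: "Suc b \<le> t \<Longrightarrow> t - Suc b \<notin> S"
  shows "ramp_bound S \<eta> t (indicator {a..b}) = (Cb - \<eta> * V) * indicator {a..b} t
    + \<eta> * V * indicator {a..b} (t + 1) - (if a \<le> t \<and> t - a \<in> S then Cb - Vb - real (t - a) * V else 0)"
proof -
  have step: "indicator {a..b} (t - s) - indicator {a..b} (t - s - 1) = (if s \<in> {s \<in> S. t - s = a} then 1 else 0 :: real)"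
    if "s \<in> S" for s
  proof -
    have "t - s \<noteq> Suc b"
    proof
      assume "t - s = Suc b"
      moreover have "s + 2 \<le> t" using that S_range by auto
      ultimately have "Suc b \<le> t" "t - Suc b = s" by auto
      then show False using no_shutdown that by simp
    qed
    then show ?thesis using that assms(1) S_range by (auto simp: indicator_def)
  qed
  have "(\<Sum>s\<in>S. (Cb - Vb - real s * V) * (indicator {a..b} (t - s) - indicator {a..b} (t - s - 1)))
      = (\<Sum>s\<in>S. if s \<in> {s \<in> S. t - s = a} then Cb - Vb - real s * V else 0)"
    by (intro sum.cong refl) (simp only: step, simp)
  also have "\<dots> = (\<Sum>s\<in>{s \<in> S. t - s = a}. Cb - Vb - real s * V)"
    using finite_S by (simp add: sum.inter_filter)
  also have "{s \<in> S. t - s = a} = (if a \<le> t \<and> t - a \<in> S then {t - a} else {})"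
    using S_range by auto
  finally have "(\<Sum>s\<in>S. (Cb - Vb - real s * V) * (indicator {a..b} (t - s) - indicator {a..b} (t - s - 1)))
      = (if a \<le> t \<and> t - a \<in> S then Cb - Vb - real (t - a) * V else 0)"
    by simp
  then show ?thesis unfolding ramp_bound_def by simp
qed

abbreviation face where
  "face \<equiv> {p \<in> convex hull \<P>. xc \<iota> p t = ramp_bound S \<eta> t (yc \<iota> p)}"

abbreviation extended_face where
  "extended_face \<equiv> insert (reduced_output t) face"

lemma point_of_on_face:
  assumes "point_of f g \<in> \<P>" "f t = ramp_bound S \<eta> t g"
  shows "point_of f g \<in> face"
proof -
  have "ramp_bound S \<eta> t (yc \<iota> (point_of f g)) = ramp_bound S \<eta> t g"
    by (rule ramp_bound_cong) simp
  moreover have "xc \<iota> (point_of f g) t = f t"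
    using t_range by simp
  ultimately show ?thesis using assms by (auto intro: hull_inc)
qed

lemma ramp_bound_all_on: "ramp_bound S \<eta> t (indicator {1..T}) = Cb"
  using t_minus_1_notin_S t_range by (simp add: ramp_bound_indicator algebra_simps)

lemma full_output_points_subset_face: "full_output_points \<subseteq> extended_face"
proof -
  have "ramp_bound S \<eta> t (indicator {1..T}) = Cb * indicator {1..T} t"
    using ramp_bound_all_on t_range by simp
  then have full: "full_output \<in> face"
    using full_output_points_subset_\<P> unfolding full_output_points_def full_output_def
    by (intro point_of_on_face) auto
  have reduced: "reduced_output k \<in> face" if "k \<in> {1..T}" "k \<noteq> t" for k
    using that full_output_points_subset_\<P> ramp_bound_all_on t_range
    unfolding full_output_points_def reduced_output_def by (intro point_of_on_face) auto
  show ?thesis unfolding full_output_points_def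
  proof (intro insert_subsetI image_subsetI)
    show "full_output \<in> extended_face"
      using full by (rule insertI2)
    show "reduced_output k \<in> extended_face" if "k \<in> {1..T}" for k
      using reduced[OF that] by (cases "k = t") simp_all
  qed
qed

lemma reduced_output_off_face:
  "xc \<iota> (reduced_output t) t \<noteq> ramp_bound S \<eta> t (yc \<iota> (reduced_output t))"
proof -
  have "ramp_bound S \<eta> t (yc \<iota> (reduced_output t)) = ramp_bound S \<eta> t (indicator {1..T})"
    unfolding reduced_output_def by (rule ramp_bound_cong) simp
  then have "ramp_bound S \<eta> t (yc \<iota> (reduced_output t)) = Cb"
    using ramp_bound_all_on by simp
  moreover have "xc \<iota> (reduced_output t) t = Cb - V"
    unfolding reduced_output_def using t_range by simp
  ultimately show ?thesis using V_pos by simp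
qed

lemma on_from_in_y_span_if_prefix_on_face:
  "point_of f (indicator {1..k - 1}) \<in> face \<Longrightarrow> k \<in> {1..T} \<Longrightarrow> on_from k \<in> y_span extended_face"
  by (rule on_from_in_y_span_if_prefix[OF full_output_points_subset_face insertI2])

lemma on_from_in_y_span_if_no_startup:
  assumes k: "k \<in> {1..t}" "t - k \<notin> S"
  shows "on_from k \<in> y_span extended_face"
proof -
  have "ramp_bound S \<eta> t (indicator {1..k - 1}) = 0"
    using k t_minus_1_notin_S by (auto simp: ramp_bound_indicator indicator_def)
  then have "point_of (\<lambda>j. Cu * indicator {1..k - 1} j) (indicator {1..k - 1}) \<in> face"
    using prefix_point_in_\<P> k t_range by (intro point_of_on_face) auto
  then show ?thesis
    by (rule on_from_in_y_span_if_prefix_on_face) (use k t_range in auto)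
qed

lemma on_from_1_in_y_span: "on_from 1 \<in> y_span extended_face"
  using on_from_in_y_span_if_no_startup[of 1] t_minus_1_notin_S t_range by simp

lemma on_from_in_y_span_if_suffix_on_face:
  "point_of f (indicator {a..T}) \<in> face \<Longrightarrow> a \<le> Suc T \<Longrightarrow> on_from a \<in> y_span extended_face"
  by (rule on_from_in_y_span_if_suffix[OF full_output_points_subset_face on_from_1_in_y_span insertI2])

lemma on_from_in_y_span_if_startup:
  assumes k: "k \<in> {1..t}" "t - k \<in> S"
  shows "on_from k \<in> y_span extended_face"
proof -
  have s: "t - k + 2 \<le> t" "real (t - k) * V \<le> Cb - Vb" using S_range k by auto
  have "point_of (\<lambda>j. (Vb + real (min (j - k) (t - k)) * V) * indicator {k..T} j) (indicator {k..T}) \<in> \<P>"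
    using s k t_range by (intro point_of_in_\<P> ramp_up_schedule_feasible) auto
  moreover have "ramp_bound S \<eta> t (indicator {k..T}) = Vb + real (t - k) * V"
    using k t_range by (simp add: ramp_bound_indicator indicator_def algebra_simps)
  ultimately have "point_of (\<lambda>j. (Vb + real (min (j - k) (t - k)) * V) * indicator {k..T} j) (indicator {k..T}) \<in> face"
    using k t_range by (intro point_of_on_face) auto
  then show ?thesis
    by (rule on_from_in_y_span_if_suffix_on_face) (use k t_range in auto)
qed

lemma on_from_in_y_span_iff_on_face:
  "point_of f (indicator {a..b}) \<in> face \<Longrightarrow> a \<le> Suc b \<Longrightarrow> b \<le> T \<Longrightarrow>
    on_from a \<in> y_span extended_face \<longleftrightarrow> on_from (Suc b) \<in> y_span extended_face"
  by (rule on_from_in_y_span_iff[OF full_output_points_subset_face on_from_1_in_y_span insertI2])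

lemma on_from_in_y_span_late:
  assumes k: "k \<in> {t + 2..T}"
  shows "on_from k \<in> y_span extended_face"
proof -
  have "point_of (\<lambda>j. Cu * indicator {k..T} j) (indicator {k..T}) \<in> face"
    using suffix_point_in_\<P>[of k] k t_range
    by (intro point_of_on_face) (auto simp: ramp_bound_indicator indicator_def)
  then show ?thesis
    by (rule on_from_in_y_span_if_suffix_on_face) (use k t_range in auto)
qed

lemma on_from_next_in_y_span_if_\<eta>_zero:
  assumes \<eta>: "\<eta> = 0"
  shows "on_from (t + 1) \<in> y_span extended_face"
proof -
  have "point_of (\<lambda>j. Cu * indicator {t + 1..T} j) (indicator {t + 1..T}) \<in> face"
    using \<eta> suffix_point_in_\<P>[of "t + 1"] t_range ramp_bound_indicator[of "t + 1" T]
    by (intro point_of_on_face) (auto simp: indicator_def)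
  then show ?thesis
    by (rule on_from_in_y_span_if_suffix_on_face) (use t_range in auto)
qed

lemma on_from_next_in_y_span_if_\<eta>_max:
  assumes \<eta>: "\<eta> * V = Cb - Vb"
  shows "on_from (t + 1) \<in> y_span extended_face"
proof -
  have "ramp_bound S \<eta> t (indicator {1..t}) = Vb"
    using \<eta> t_range t_minus_1_notin_S by (simp add: ramp_bound_indicator indicator_def algebra_simps)
  moreover have "point_of (\<lambda>j. Vb * indicator {1..t} j) (indicator {1..t}) \<in> \<P>"
    using t_range Cu_less_Vb Vb_V_le_Cb V_pos by (intro point_of_in_\<P> constant_schedule_feasible) auto
  ultimately have "point_of (\<lambda>j. Vb * indicator {1..t} j) (indicator {1..t}) \<in> face"
    using t_range by (intro point_of_on_face) (auto simp: indicator_def)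
  then have "point_of (\<lambda>j. Vb * indicator {1..t + 1 - 1} j) (indicator {1..t + 1 - 1}) \<in> face"
    unfolding add_diff_cancel_right' .
  then show ?thesis
    by (rule on_from_in_y_span_if_prefix_on_face) (use t_range in auto)
qed

lemma on_from_next_in_y_span_if_\<eta>_min_up:
  assumes \<eta>: "\<eta> = real L - 1" and s0: "L - 1 \<in> S"
  shows "on_from (t + 1) \<in> y_span extended_face"
proof -
  have s0_range: "L - 1 + 2 \<le> t" "L - 1 + 1 = L" "t - (L - 1) \<le> t" "t - (t - (L - 1)) = L - 1"
    using S_range s0 by auto
  have "ramp_bound S \<eta> t (indicator {t - (L - 1)..t}) = Cb - \<eta> * V - (Cb - Vb - real (L - 1) * V)"
    using ramp_bound_indicator[of "t - (L - 1)" t] s0 s0_range by (simp only: indicator_def) simp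
  also have "\<dots> = Vb"
    using s0_range unfolding \<eta> by (simp add: of_nat_diff algebra_simps)
  finally have "ramp_bound S \<eta> t (indicator {t - (L - 1)..t}) = Vb" .
  moreover have "point_of (\<lambda>j. Vb * indicator {t - (L - 1)..t} j) (indicator {t - (L - 1)..t}) \<in> \<P>"
    using s0_range t_range Cu_less_Vb Vb_V_le_Cb V_pos
    by (intro point_of_in_\<P> constant_schedule_feasible) auto
  ultimately have "point_of (\<lambda>j. Vb * indicator {t - (L - 1)..t} j) (indicator {t - (L - 1)..t}) \<in> face"
    using s0_range by (intro point_of_on_face) (auto simp: indicator_def)
  then have "on_from (t - (L - 1)) \<in> y_span extended_face \<longleftrightarrow> on_from (Suc t) \<in> y_span extended_face"
    by (rule on_from_in_y_span_iff_on_face) (use t_range in auto)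
  moreover have "on_from (t - (L - 1)) \<in> y_span extended_face"
    using on_from_in_y_span_if_startup[of "t - (L - 1)"] s0 s0_range by auto
  ultimately show ?thesis by simp
qed

theorem ramp_bound_facet_defining:
  assumes "\<eta> = 0 \<or> \<eta> * V = Cb - Vb \<or> (\<eta> = real L - 1 \<and> L - 1 \<in> S)"
  shows "facet_defining (convex hull \<P>) (\<lambda>p. xc \<iota> p t) (\<lambda>p. ramp_bound S \<eta> t (yc \<iota> p))"
proof (rule facet_definingI[OF linear_ramp_bound ramp_bound_valid_on_\<P> affine_hull_\<P> reduced_output_off_face])
  have "on_from k \<in> y_span extended_face" if "k \<in> {1..T}" for k
  proof -
    consider "k \<le> t" "t - k \<notin> S" | "k \<le> t" "t - k \<in> S" | "k = t + 1" | "t + 2 \<le> k" by linarith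
    then show ?thesis
    proof cases
      case 3
      then show ?thesis
        using assms on_from_next_in_y_span_if_\<eta>_zero on_from_next_in_y_span_if_\<eta>_max
          on_from_next_in_y_span_if_\<eta>_min_up by auto
    qed (use that on_from_in_y_span_if_no_startup on_from_in_y_span_if_startup on_from_in_y_span_late in auto)
  qed
  then show "affine hull extended_face = UNIV"
    by (intro affine_hull_eq_UNIV_if_on_from full_output_points_subset_face) blast
qed

end

lemma (in indexed_ramping) ramp_inequalityI:
  assumes "t \<in> {1..T - 1}" "\<forall>s\<in>S. s + 2 \<le> t"
    and "\<forall>s\<in>S. int s \<le> int L - 1 \<and> int s \<le> \<lfloor>(Cb - Vb) / V\<rfloor>"
    and "0 \<le> \<eta>" "\<eta> \<le> real L - 1" "\<eta> \<le> (Cb - Vb) / V"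
  shows "ramp_inequality T L Cb Cu V Vb \<iota> S \<eta> t"
proof
  show "\<forall>s\<in>S. s + 2 \<le> t \<and> s + 1 \<le> L \<and> real s * V \<le> Cb - Vb"
  proof
    fix s assume "s \<in> S"
    then have "int s \<le> int L - 1" "real s \<le> (Cb - Vb) / V"
      using assms(3) by (auto simp: le_floor_iff)
    then show "s + 2 \<le> t \<and> s + 1 \<le> L \<and> real s * V \<le> Cb - Vb"
      using assms(2) \<open>s \<in> S\<close> V_pos by (simp add: pos_le_divide_eq)
  qed
  show "\<eta> * V \<le> Cb - Vb"
    using assms(6) V_pos by (simp add: pos_le_divide_eq)
qed (use assms in auto)

theorem proposition3:
  fixes \<iota> :: "nat \<Rightarrow> 'n::finite"
    and T L l :: nat
    and Cbar Cund V Vbar \<eta> :: real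
    and S :: "nat set"
  assumes "T > 0" and "L > 0" and "l > 0"
    and "Cbar > Cund" and "Cund > 0" and "V > 0" and "Vbar + V \<le> Cbar"
    and "Cund < Vbar" and "Vbar < Cund + V"
    and "bij_betw \<iota> {1..T} (UNIV :: 'n set)"
    and "\<forall>s\<in>S. int s \<le> int L - 1 \<and> int s \<le> int T - 3 \<and> int s \<le> \<lfloor>(Cbar - Vbar) / V\<rfloor>"
    and "0 \<le> \<eta>" and "\<eta> \<le> real L - 1" and "\<eta> \<le> (Cbar - Vbar) / V"
  shows
    "(\<forall>t\<in>{1..T - 1}. (\<forall>s\<in>S. t \<ge> s + 2) \<longrightarrow>
        valid_ineq (convex hull (Pset \<iota> T L l Cbar Cund V Vbar))
          (\<lambda>p. xc \<iota> p t)
          (\<lambda>p. (Cbar - \<eta> * V) * yc \<iota> p t + \<eta> * V * yc \<iota> p (t + 1)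
               - (\<Sum>s\<in>S. (Cbar - Vbar - real s * V) * (yc \<iota> p (t - s) - yc \<iota> p (t - s - 1))))) \<and>
     (\<forall>t\<in>{2..T}. (\<forall>s\<in>S. t + s + 1 \<le> T) \<longrightarrow>
        valid_ineq (convex hull (Pset \<iota> T L l Cbar Cund V Vbar))
          (\<lambda>p. xc \<iota> p t)
          (\<lambda>p. (Cbar - \<eta> * V) * yc \<iota> p t + \<eta> * V * yc \<iota> p (t - 1)
               - (\<Sum>s\<in>S. (Cbar - Vbar - real s * V) * (yc \<iota> p (t + s) - yc \<iota> p (t + s + 1))))) \<and>
     ((\<eta> = 0 \<or> \<eta> = (Cbar - Vbar) / V \<or> (\<eta> = real L - 1 \<and> L - 1 \<in> S)) \<longrightarrow>
       (\<forall>t\<in>{1..T - 1}. (\<forall>s\<in>S. t \<ge> s + 2) \<longrightarrow>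
        facet_defining (convex hull (Pset \<iota> T L l Cbar Cund V Vbar))
          (\<lambda>p. xc \<iota> p t)
          (\<lambda>p. (Cbar - \<eta> * V) * yc \<iota> p t + \<eta> * V * yc \<iota> p (t + 1)
               - (\<Sum>s\<in>S. (Cbar - Vbar - real s * V) * (yc \<iota> p (t - s) - yc \<iota> p (t - s - 1))))) \<and>
       (\<forall>t\<in>{2..T}. (\<forall>s\<in>S. t + s + 1 \<le> T) \<longrightarrow>
        facet_defining (convex hull (Pset \<iota> T L l Cbar Cund V Vbar))
          (\<lambda>p. xc \<iota> p t)
          (\<lambda>p. (Cbar - \<eta> * V) * yc \<iota> p t + \<eta> * V * yc \<iota> p (t - 1)
               - (\<Sum>s\<in>S. (Cbar - Vbar - real s * V) * (yc \<iota> p (t + s) - yc \<iota> p (t + s + 1))))))"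
proof -
  interpret indexed_ramping T L l Cbar Cund V Vbar \<iota>
    using assms by unfold_locales auto
  \<comment> \<open>As \<open>l\<close> occurs in no assumption of the locale
    \<open>ramp_inequality\<close>, it is not an argument of the locale predicate.\<close>
  have window: "ramp_inequality T L Cbar Cund V Vbar \<iota> S \<eta> t"
    if "t \<in> {1..T - 1}" "\<forall>s\<in>S. s + 2 \<le> t" for t
    using that assms(11-14) by (intro ramp_inequalityI) auto
  have reversed_window: "ramp_inequality T L Cbar Cund V Vbar \<iota> S \<eta> (T + 1 - t)"
    if "t \<in> {2..T}" "\<forall>s\<in>S. t + s + 1 \<le> T" for t
    using that by (intro window) auto
  have special: "\<eta> = 0 \<or> \<eta> * V = Cbar - Vbar \<or> (\<eta> = real L - 1 \<and> L - 1 \<in> S)"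
    if "\<eta> = 0 \<or> \<eta> = (Cbar - Vbar) / V \<or> (\<eta> = real L - 1 \<and> L - 1 \<in> S)"
    using that assms(6) by auto
  show ?thesis
    using ramp_inequality.ramp_bound_valid_ineq[OF window]
      ramp_inequality.ramp_bound_facet_defining[OF window special]
      valid_ineq_time_reversal[OF _ _ ramp_inequality.ramp_bound_valid_ineq[OF reversed_window]]
      facet_defining_time_reversal[OF _ _ ramp_inequality.ramp_bound_facet_defining[OF reversed_window special]]
    unfolding ramp_bound_def by blast
qed

end
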